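(* Let $M$ be a finite monoid in $\mathbf{DG}$, $X,Y\in\Lambda(M)$ with idempotent generators $e_X,e_Y$. Then $m\in\mathrm{Irr}_{\mathscr K(M)}(e_X,e_Y)$ if and only if: (1) $e_X=e_R(m)$; (2) $e_Y=e_L(m)$; (3) $m\notin\nabla Y\nabla X$; (4) $m$ is a null element.
   Context: $E(M)$ idempotents. $M$ is rectangular if each $\{f\in E(M):MfM=MeM\}$ is closed under multiplication; $M\in\mathbf{DG}$ if it is rectangular and $MeM=MfM$ implies $e=f$ for idempotents. $\Lambda(M)$ is the set of ideals $MeM$, $e\in E(M)$. $\nabla X=\{m: X\not\subseteq MmM\}$, $\nabla Y\nabla X=\{ab: a\in\nabla Y, b\in\nabla X\}$. $\mathrm{St}_L(m)=\{n:nm=m\}$, $\mathrm{St}_R(m)=\{n: mn=m\}$ are submonoids in $\mathbf{DG}$; $e_L(m)$, $e_R(m)$ denote the unique idempotent in the minimal ideal of $\mathrm{St}_L(m)$, $\mathrm{St}_R(m)$ respectively. $m$ is null if $m\notin mMm$. $\mathscr K(M)$: objects $E(M)$, morphisms $e\to f$ elements of $fMe$, composition the product; a morphism is irreducible if it is neither a split mono nor a split epi and whenever it factors as $gh$, $h$ is a split mono or $g$ a split epi; $\mathrm{Irr}_{\mathscr K(M)}(e,f)$ is the set of these. *)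

theory Defs
  imports Main
begin

text \<open>The monoid M is the whole type 'a of class monoid_mult (finite: class finite).\<close>

definition idems :: "'a itself \<Rightarrow> 'a::monoid_mult set" where
  "idems _ = {e. e * e = e}"

definition pideal :: "'a::monoid_mult \<Rightarrow> 'a set" where
  "pideal m = {a * m * b | a b. True}"

definition rectangular :: "'a::monoid_mult itself \<Rightarrow> bool" where
  "rectangular T \<longleftrightarrow> (\<forall>e \<in> idems T. \<forall>f \<in> idems T. \<forall>g \<in> idems T.
      pideal f = pideal e \<longrightarrow> pideal g = pideal e \<longrightarrow> pideal (f * g) = pideal e \<and> f * g \<in> idems T)"

definition DG :: "'a::monoid_mult itself \<Rightarrow> bool" where
  "DG T \<longleftrightarrow> rectangular T \<and>
     (\<forall>e \<in> idems T. \<forall>f \<in> idems T. pideal e = pideal f \<longrightarrow> e = f)"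

definition Lambda :: "'a::monoid_mult itself \<Rightarrow> 'a set set" where
  "Lambda T = {pideal e | e. e \<in> idems T}"

definition nabla :: "'a::monoid_mult set \<Rightarrow> 'a set" where
  "nabla X = {m. \<not> X \<subseteq> pideal m}"

definition setprod :: "'a::monoid_mult set \<Rightarrow> 'a set \<Rightarrow> 'a set" where
  "setprod A B = {a * b | a b. a \<in> A \<and> b \<in> B}"

definition StL :: "'a::monoid_mult \<Rightarrow> 'a set" where
  "StL m = {n. n * m = m}"

definition StR :: "'a::monoid_mult \<Rightarrow> 'a set" where
  "StR m = {n. m * n = m}"

definition is_ideal_of :: "'a::monoid_mult set \<Rightarrow> 'a set \<Rightarrow> bool" where
  "is_ideal_of I S \<longleftrightarrow> I \<subseteq> S \<and> I \<noteq> {} \<and> (\<forall>s \<in> S. \<forall>x \<in> I. s * x \<in> I \<and> x * s \<in> I)"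

definition min_ideal :: "'a::monoid_mult set \<Rightarrow> 'a set" where
  "min_ideal S = \<Inter>{I. is_ideal_of I S}"

definition eL :: "'a::monoid_mult \<Rightarrow> 'a" where
  "eL m = (THE e. e * e = e \<and> e \<in> min_ideal (StL m))"

definition eR :: "'a::monoid_mult \<Rightarrow> 'a" where
  "eR m = (THE e. e * e = e \<and> e \<in> min_ideal (StR m))"

definition null :: "'a::monoid_mult \<Rightarrow> bool" where
  "null m \<longleftrightarrow> m \<notin> {m * a * m | a. True}"

text \<open>Category K(M): morphisms e \<rightarrow> f are elements of fMe.\<close>
definition hom :: "'a::monoid_mult \<Rightarrow> 'a \<Rightarrow> 'a set" where
  "hom e f = {f * a * e | a. True}"

definition split_mono :: "'a::monoid_mult \<Rightarrow> 'a \<Rightarrow> 'a \<Rightarrow> bool" where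
  "split_mono e f h \<longleftrightarrow> h \<in> hom e f \<and> (\<exists>g \<in> hom f e. g * h = e)"

definition split_epi :: "'a::monoid_mult \<Rightarrow> 'a \<Rightarrow> 'a \<Rightarrow> bool" where
  "split_epi e f h \<longleftrightarrow> h \<in> hom e f \<and> (\<exists>g \<in> hom f e. h * g = f)"

definition Irr :: "'a::monoid_mult \<Rightarrow> 'a \<Rightarrow> 'a set" where
  "Irr e f = {m. m \<in> hom e f \<and> \<not> split_mono e f m \<and> \<not> split_epi e f m \<and>
     (\<forall>c \<in> idems TYPE('a). \<forall>h \<in> hom e c. \<forall>g \<in> hom c f.
        m = g * h \<longrightarrow> split_mono e c h \<or> split_epi c f g)}"

end

theory Submission
  imports Defs
begin

text \<open>In a finite monoid a morphism h : e \<rightarrow> c is a split mono iff e \<in> MhM, and dually for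
  split epis: if e = u h v then some power of u h fixes e, which yields a left inverse of h.
  Hence m \<in> fMe is irreducible iff e, f \<notin> MmM and every factorisation m = g h through an
  idempotent has e \<in> MhM or f \<in> MgM. Factoring through 1 gives m \<notin> \<nabla>Y\<nabla>X, and factoring
  m = m (a m) when m = m a m shows that m is null. Factoring through the idempotent e_R(m), which
  the DG property forces to satisfy e_X e_R(m) = e_R(m) = e_R(m) e_X, gives e_R(m) = e_X, and
  dually e_L(m) = e_Y. Conversely the four conditions make every factorisation split, while
  nullity rules out that m itself is split.\<close>

lemma power_periodic:
  fixes x :: "'a::monoid_mult"
  assumes "x^(i+p) = x^i"
  shows "x^(i+r+p*t) = x^(i+r)"
proof (induction t)
  case (Suc t)
  have "x^(i+r+p*Suc t) = x^(i+p) * x^(r+p*t)" by (simp add: power_add[symmetric] algebra_simps)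
  also have "\<dots> = x^(i+r+p*t)" using assms by (simp add: power_add[symmetric] algebra_simps)
  finally show ?case using Suc.IH by simp
qed simp

lemma finite_monoid_idempotent_power:
  fixes x :: "'a::{monoid_mult,finite}"
  obtains k where "k \<ge> 1" "x^k * x^k = x^k"
proof -
  have "\<not> inj (\<lambda>n::nat. x^Suc n)"
    using finite_imageD[of "\<lambda>n::nat. x^Suc n" UNIV] by auto
  then obtain a b where "a < b" "x^Suc a = x^Suc b"
    unfolding inj_def by (metis linorder_neq_iff)
  then have per: "x^(Suc a + r + (b-a)*t) = x^(Suc a + r)" for r t
    by (intro power_periodic) simp
  define n where "n = Suc a * (b-a)"
  have "Suc a * 1 \<le> n" unfolding n_def using \<open>a < b\<close> by (intro mult_le_mono2) simp
  then have "n \<ge> Suc a" by simp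
  moreover have "n = (b-a) * Suc a" by (simp add: n_def)
  ultimately have "n + n = Suc a + (n - Suc a) + (b-a) * Suc a" by linarith
  then have "x^n * x^n = x^(Suc a + (n - Suc a) + (b-a) * Suc a)"
    by (metis power_add)
  also have "\<dots> = x^(Suc a + (n - Suc a))" by (rule per)
  also have "\<dots> = x^n" using \<open>n \<ge> Suc a\<close> by simp
  finally show ?thesis using \<open>n \<ge> Suc a\<close> by (intro that[of n]) simp_all
qed

lemma power_sandwich:
  fixes x a b :: "'a::monoid_mult"
  assumes "x = a*x*b"
  shows "a^n*x*b^n = x"
proof (induction n)
  case (Suc n)
  have "a^Suc n*x*b^Suc n = a^n*(a*x*b)*b^n"
    by (simp only: power_Suc2[of a] power_Suc[of b] mult.assoc)
  then show ?case using Suc.IH assms by simp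
qed simp

lemma power_left_stable:
  fixes x a b :: "'a::{monoid_mult,finite}"
  assumes "x = a*x*b"
  obtains k where "k \<ge> 1" "a^k * x = x"
proof -
  obtain k where k: "k \<ge> 1" "a^k*a^k = a^k" by (rule finite_monoid_idempotent_power)
  have "a^k*x = (a^k*a^k)*x*b^k" using power_sandwich[OF assms, of k] by (simp add: mult.assoc)
  also have "\<dots> = x" using k power_sandwich[OF assms, of k] by simp
  finally show ?thesis using k by (intro that) simp_all
qed

lemma power_right_stable:
  fixes x a b :: "'a::{monoid_mult,finite}"
  assumes "x = a*x*b"
  obtains k where "k \<ge> 1" "x * b^k = x"
proof -
  obtain k where k: "k \<ge> 1" "b^k*b^k = b^k" by (rule finite_monoid_idempotent_power)
  have "x*b^k = a^k*x*(b^k*b^k)" by (metis power_sandwich[OF assms] mult.assoc)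
  also have "\<dots> = x" using k power_sandwich[OF assms, of k] by simp
  finally show ?thesis using k by (intro that) simp_all
qed

lemma hom_iff:
  assumes "e*e = e" "f*f = f"
  shows "x \<in> hom e f \<longleftrightarrow> f*x = x \<and> x*e = x"
proof
  assume "x \<in> hom e f"
  then obtain a where "x = f*a*e" by (auto simp: hom_def)
  then show "f*x = x \<and> x*e = x" using assms by (metis mult.assoc)
next
  assume "f*x = x \<and> x*e = x"
  then have "x = f*x*e" by simp
  then show "x \<in> hom e f" by (auto simp: hom_def)
qed

lemma pideal_mem: "a*y*b \<in> pideal y"
  by (auto simp: pideal_def)

lemma pideal_self: "y \<in> pideal y"
  using pideal_mem[of 1 y 1] by simp

lemma pideal_subset: "x \<in> pideal y \<Longrightarrow> pideal x \<subseteq> pideal y"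
  unfolding pideal_def by clarify (metis mult.assoc)

lemma nabla_pideal_iff: "x \<in> nabla (pideal e) \<longleftrightarrow> e \<notin> pideal x"
  unfolding nabla_def using pideal_self pideal_subset by blast

lemma DG_idem_eq:
  assumes "DG TYPE('a::monoid_mult)" "(e::'a)*e = e" "f*f = f" "e \<in> pideal f" "f \<in> pideal e"
  shows "e = f"
  using assms pideal_subset[of e f] pideal_subset[of f e] unfolding DG_def idems_def by blast

lemma left_inverse_of_pideal:
  fixes e h :: "'a::{monoid_mult,finite}"
  assumes "h*e = h" "e \<in> pideal h"
  obtains s where "s*h = e"
proof -
  obtain u v where "e = u*h*v" using assms(2) by (auto simp: pideal_def)
  then have "e = (u*h)*e*v" using assms(1) by (metis mult.assoc)
  then obtain k where "k \<ge> 1" "(u*h)^k*e = e" by (rule power_left_stable)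
  then obtain j where "(u*h)^Suc j*e = e" by (metis Suc_le_D One_nat_def)
  then have "((u*h)^j*u)*h = e" using assms(1) by (simp only: power_Suc2 mult.assoc)
  then show ?thesis by (rule that)
qed

lemma right_inverse_of_pideal:
  fixes f g :: "'a::{monoid_mult,finite}"
  assumes "f*g = g" "f \<in> pideal g"
  obtains s where "g*s = f"
proof -
  obtain u v where "f = u*g*v" using assms(2) by (auto simp: pideal_def)
  then have "f = u*f*(g*v)" using assms(1) by (metis mult.assoc)
  then obtain k where "k \<ge> 1" "f*(g*v)^k = f" by (rule power_right_stable)
  then obtain j where "f*(g*v)^Suc j = f" by (metis Suc_le_D One_nat_def)
  then have "(f*g)*(v*(g*v)^j) = f" by (simp only: power_Suc mult.assoc)
  then have "g*(v*(g*v)^j) = f" using assms(1) by simp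
  then show ?thesis by (rule that)
qed

lemma split_mono_iff_pideal:
  fixes e c h :: "'a::{monoid_mult,finite}"
  assumes "e*e = e" "c*c = c" "h \<in> hom e c"
  shows "split_mono e c h \<longleftrightarrow> e \<in> pideal h"
proof
  assume "split_mono e c h"
  then obtain g where "g*h = e" unfolding split_mono_def by blast
  then show "e \<in> pideal h" using pideal_mem[of g h 1] by simp
next
  assume "e \<in> pideal h"
  have hc: "c*h = h" and he: "h*e = h" using assms hom_iff by blast+
  obtain s where s: "s*h = e" using he \<open>e \<in> pideal h\<close> by (rule left_inverse_of_pideal)
  have "e*s*c \<in> hom c e" by (auto simp: hom_def)
  moreover have "(e*s*c)*h = e" using s hc assms(1) by (simp add: mult.assoc)
  ultimately show "split_mono e c h" using assms(3) unfolding split_mono_def by blast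
qed

lemma split_epi_iff_pideal:
  fixes c f g :: "'a::{monoid_mult,finite}"
  assumes "c*c = c" "f*f = f" "g \<in> hom c f"
  shows "split_epi c f g \<longleftrightarrow> f \<in> pideal g"
proof
  assume "split_epi c f g"
  then obtain h where "g*h = f" unfolding split_epi_def by blast
  then show "f \<in> pideal g" using pideal_mem[of 1 g h] by simp
next
  assume "f \<in> pideal g"
  have gc: "g*c = g" and fg: "f*g = g" using assms hom_iff by blast+
  obtain s where s: "g*s = f" using fg \<open>f \<in> pideal g\<close> by (rule right_inverse_of_pideal)
  have "c*s*f \<in> hom f c" by (auto simp: hom_def)
  moreover have "g*(c*s*f) = f" using s gc assms(2) by (simp add: mult.assoc[symmetric])
  ultimately show "split_epi c f g" using assms(3) unfolding split_epi_def by blast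
qed

lemma Irr_iff_pideal:
  fixes e f m :: "'a::{monoid_mult,finite}"
  assumes "e*e = e" "f*f = f"
  shows "m \<in> Irr e f \<longleftrightarrow> m \<in> hom e f \<and> e \<notin> pideal m \<and> f \<notin> pideal m \<and>
    (\<forall>c \<in> idems TYPE('a). \<forall>h \<in> hom e c. \<forall>g \<in> hom c f. m = g*h \<longrightarrow> e \<in> pideal h \<or> f \<in> pideal g)"
  using assms unfolding Irr_def idems_def by (auto simp: split_mono_iff_pideal split_epi_iff_pideal)

definition submonoid :: "'a::monoid_mult set \<Rightarrow> bool" where
  "submonoid S \<longleftrightarrow> 1 \<in> S \<and> (\<forall>x \<in> S. \<forall>y \<in> S. x*y \<in> S)"

lemma submonoid_StL: "submonoid (StL m)"
  by (auto simp: submonoid_def StL_def mult.assoc)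

lemma submonoid_StR: "submonoid (StR m)"
  by (auto simp: submonoid_def StR_def mult.assoc[symmetric])

lemma is_ideal_of_min_ideal:
  fixes S :: "'a::{monoid_mult,finite} set"
  assumes "submonoid S"
  shows "is_ideal_of (min_ideal S) S"
proof -
  have "is_ideal_of S S" using assms by (auto simp: submonoid_def is_ideal_of_def)
  then obtain I where I: "is_ideal_of I S" and least: "\<And>J. is_ideal_of J S \<Longrightarrow> card I \<le> card J"
    using ex_has_least_nat[of "\<lambda>I. is_ideal_of I S" S card] by blast
  have "I \<subseteq> J" if J: "is_ideal_of J S" for J
  proof -
    obtain i j where "i \<in> I" "j \<in> J" using I J by (auto simp: is_ideal_of_def)
    then have "i*j \<in> I \<inter> J" using I J by (auto simp: is_ideal_of_def)
    then have "is_ideal_of (I \<inter> J) S" using I J by (auto simp: is_ideal_of_def)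
    then have "card I \<le> card (I \<inter> J)" by (rule least)
    then show ?thesis using card_seteq[of I "I \<inter> J"] by auto
  qed
  then have "min_ideal S = I" unfolding min_ideal_def using I by blast
  then show ?thesis using I by simp
qed

lemma min_ideal_subset_pideal:
  assumes "submonoid S" "s \<in> S"
  shows "min_ideal S \<subseteq> pideal s"
proof -
  let ?J = "{a*s*b | a b. a \<in> S \<and> b \<in> S}"
  have "is_ideal_of ?J S"
    unfolding is_ideal_of_def
  proof (intro conjI ballI)
    show "?J \<subseteq> S" "?J \<noteq> {}" using assms by (auto simp: submonoid_def)
  next
    fix t x assume "t \<in> S" "x \<in> ?J"
    then obtain a b where "x = a*s*b" "a \<in> S" "b \<in> S" by blast
    moreover have "t*(a*s*b) = (t*a)*s*b" "(a*s*b)*t = a*s*(b*t)" by (simp_all add: mult.assoc)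
    ultimately show "t*x \<in> ?J" "x*t \<in> ?J" using assms(1) \<open>t \<in> S\<close> unfolding submonoid_def by blast+
  qed
  then have "min_ideal S \<subseteq> ?J" unfolding min_ideal_def by blast
  also have "?J \<subseteq> pideal s" using pideal_mem by blast
  finally show ?thesis .
qed

lemma ideal_power_mem:
  assumes "is_ideal_of I S" "y \<in> I" "k \<ge> 1"
  shows "y^k \<in> I"
proof -
  have "y^Suc n \<in> I" for n
    by (induction n) (use assms in \<open>auto simp: is_ideal_of_def\<close>)
  then show ?thesis using assms(3) by (metis Suc_le_D One_nat_def)
qed

lemma min_ideal_ex_idem:
  fixes S :: "'a::{monoid_mult,finite} set"
  assumes "submonoid S"
  shows "\<exists>e. e*e = e \<and> e \<in> min_ideal S"
proof -
  have I: "is_ideal_of (min_ideal S) S" using assms by (rule is_ideal_of_min_ideal)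
  then obtain y where "y \<in> min_ideal S" by (auto simp: is_ideal_of_def)
  obtain k where "k \<ge> 1" "y^k*y^k = y^k" by (rule finite_monoid_idempotent_power)
  then show ?thesis using ideal_power_mem[OF I \<open>y \<in> min_ideal S\<close>] by blast
qed

lemma min_ideal_idem_unique:
  assumes "DG TYPE('a::{monoid_mult,finite})" "submonoid (S::'a set)"
    and "e*e = e" "e \<in> min_ideal S" "f*f = f" "f \<in> min_ideal S"
  shows "e = f"
proof -
  have "min_ideal S \<subseteq> S" using is_ideal_of_min_ideal[OF assms(2)] by (simp add: is_ideal_of_def)
  then show ?thesis using assms min_ideal_subset_pideal[OF assms(2)] DG_idem_eq by blast
qed

text \<open>Some power of e f e is idempotent and lies in the minimal ideal, so it equals f.\<close>
lemma min_ideal_idem_absorbs: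
  fixes S :: "'a::{monoid_mult,finite} set"
  assumes "DG TYPE('a)" "submonoid S" "e \<in> S" "e*e = e" "f*f = f" "f \<in> min_ideal S"
  shows "e*f = f \<and> f*e = f"
proof -
  have I: "is_ideal_of (min_ideal S) S" using assms(2) by (rule is_ideal_of_min_ideal)
  define y where "y = e*f*e"
  have "y \<in> min_ideal S" using I assms(3,6) unfolding y_def is_ideal_of_def by blast
  obtain k where k: "k \<ge> 1" "y^k*y^k = y^k" by (rule finite_monoid_idempotent_power)
  have "y^k = f"
    using min_ideal_idem_unique[OF assms(1,2) k(2) _ assms(5,6)] ideal_power_mem[OF I \<open>y \<in> min_ideal S\<close> k(1)] .
  moreover obtain j where "k = Suc j" using k(1) by (metis Suc_le_D One_nat_def)
  moreover have "e*y = y" "y*e = y" using assms(4) unfolding y_def by (metis mult.assoc)+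
  ultimately show ?thesis by (metis power_Suc power_Suc2 mult.assoc)
qed

lemma min_ideal_the_idem:
  fixes S :: "'a::{monoid_mult,finite} set"
  assumes "DG TYPE('a)" "submonoid S"
  defines "e \<equiv> THE e. e*e = e \<and> e \<in> min_ideal S"
  shows "e*e = e" "e \<in> min_ideal S" "e \<in> S"
proof -
  have "\<exists>!e. e*e = e \<and> e \<in> min_ideal S"
    using min_ideal_ex_idem[OF assms(2)] min_ideal_idem_unique[OF assms(1,2)] by blast
  then have "e*e = e \<and> e \<in> min_ideal S" unfolding e_def by (rule theI')
  then show "e*e = e" "e \<in> min_ideal S" by blast+
  then show "e \<in> S" using is_ideal_of_min_ideal[OF assms(2)] by (auto simp: is_ideal_of_def)
qed

lemma eR_idem_stab:
  fixes m :: "'a::{monoid_mult,finite}"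
  assumes "DG TYPE('a)"
  shows "eR m * eR m = eR m" "m * eR m = m"
proof -
  note P = min_ideal_the_idem[OF assms submonoid_StR, folded eR_def]
  show "eR m * eR m = eR m" by (rule P(1))
  show "m * eR m = m" using P(3) by (simp add: StR_def)
qed

lemma eL_idem_stab:
  fixes m :: "'a::{monoid_mult,finite}"
  assumes "DG TYPE('a)"
  shows "eL m * eL m = eL m" "eL m * m = m"
proof -
  note P = min_ideal_the_idem[OF assms submonoid_StL, folded eL_def]
  show "eL m * eL m = eL m" by (rule P(1))
  show "eL m * m = m" using P(3) by (simp add: StL_def)
qed

lemma eR_absorbs:
  fixes m e :: "'a::{monoid_mult,finite}"
  assumes "DG TYPE('a)" "m*e = m" "e*e = e"
  shows "e * eR m = eR m \<and> eR m * e = eR m"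
proof -
  note P = min_ideal_the_idem[OF assms(1) submonoid_StR, folded eR_def]
  have "e \<in> StR m" using assms(2) by (simp add: StR_def)
  then show ?thesis using min_ideal_idem_absorbs[OF assms(1) submonoid_StR _ assms(3) P(1,2)] by blast
qed

lemma eL_absorbs:
  fixes m e :: "'a::{monoid_mult,finite}"
  assumes "DG TYPE('a)" "e*m = m" "e*e = e"
  shows "e * eL m = eL m \<and> eL m * e = eL m"
proof -
  note P = min_ideal_the_idem[OF assms(1) submonoid_StL, folded eL_def]
  have "e \<in> StL m" using assms(2) by (simp add: StL_def)
  then show ?thesis using min_ideal_idem_absorbs[OF assms(1) submonoid_StL _ assms(3) P(1,2)] by blast
qed

lemma Irr_source_eq_eR:
  fixes e f m :: "'a::{monoid_mult,finite}"
  assumes DG: "DG TYPE('a)" and idem: "e*e = e" "f*f = f" and irr: "m \<in> Irr e f"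
  shows "e = eR m"
proof -
  note irr' = irr[unfolded Irr_iff_pideal[OF idem]]
  have me: "m*e = m" and fm: "f*m = m" using irr' hom_iff[OF idem] by blast+
  define r where "r = eR m"
  have rr: "r*r = r" and mr: "m*r = m" using eR_idem_stab[OF DG] unfolding r_def by auto
  have er: "e*r = r" "r*e = r" using eR_absorbs[OF DG me idem(1)] unfolding r_def by auto
  have "r \<in> idems TYPE('a)" "r \<in> hom e r" "m \<in> hom r f"
    using rr er fm mr hom_iff[OF idem(1) rr] hom_iff[OF rr idem(2)] by (simp_all add: idems_def)
  then have "e \<in> pideal r \<or> f \<in> pideal m" using irr' mr by metis
  then have "e \<in> pideal r" using irr' by blast
  moreover have "r \<in> pideal e" using pideal_mem[of r e 1] er by simp
  ultimately show ?thesis using DG_idem_eq[OF DG idem(1) rr] unfolding r_def by blast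
qed

lemma Irr_target_eq_eL:
  fixes e f m :: "'a::{monoid_mult,finite}"
  assumes DG: "DG TYPE('a)" and idem: "e*e = e" "f*f = f" and irr: "m \<in> Irr e f"
  shows "f = eL m"
proof -
  note irr' = irr[unfolded Irr_iff_pideal[OF idem]]
  have me: "m*e = m" and fm: "f*m = m" using irr' hom_iff[OF idem] by blast+
  define l where "l = eL m"
  have ll: "l*l = l" and lm: "l*m = m" using eL_idem_stab[OF DG] unfolding l_def by auto
  have fl: "f*l = l" "l*f = l" using eL_absorbs[OF DG fm idem(2)] unfolding l_def by auto
  have "l \<in> idems TYPE('a)" "m \<in> hom e l" "l \<in> hom l f"
    using ll fl me lm hom_iff[OF idem(1) ll] hom_iff[OF ll idem(2)] by (simp_all add: idems_def)
  then have "e \<in> pideal m \<or> f \<in> pideal l" using irr' lm by metis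
  then have "f \<in> pideal l" using irr' by blast
  moreover have "l \<in> pideal f" using pideal_mem[of 1 f l] fl by simp
  ultimately show ?thesis using DG_idem_eq[OF DG idem(2) ll] unfolding l_def by blast
qed

lemma Irr_null:
  fixes e f m :: "'a::{monoid_mult,finite}"
  assumes idem: "e*e = e" "f*f = f" and irr: "m \<in> Irr e f"
  shows "null m"
  unfolding null_def
proof
  note irr' = irr[unfolded Irr_iff_pideal[OF idem]]
  have me: "m*e = m" and fm: "f*m = m" using irr' hom_iff[OF idem] by blast+
  assume "m \<in> {m*a*m | a. True}"
  then obtain a where a: "m = m*a*m" by blast
  define c where "c = a*m"
  have cc: "c*c = c" and mc: "m*c = m" and ce: "c*e = c"
    using a me unfolding c_def by (metis mult.assoc)+
  have "c \<in> idems TYPE('a)" "c \<in> hom e c" "m \<in> hom c f"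
    using cc ce fm mc hom_iff[OF idem(1) cc] hom_iff[OF cc idem(2)] by (simp_all add: idems_def)
  then have "e \<in> pideal c \<or> f \<in> pideal m" using irr' mc by metis
  moreover have "pideal c \<subseteq> pideal m" using pideal_subset pideal_mem[of a m 1] unfolding c_def by simp
  ultimately show False using irr' by blast
qed

lemma Irr_not_mem_nabla_prod:
  fixes e f m :: "'a::{monoid_mult,finite}"
  assumes idem: "e*e = e" "f*f = f" and irr: "m \<in> Irr e f"
  shows "m \<notin> setprod (nabla (pideal f)) (nabla (pideal e))"
proof
  note irr' = irr[unfolded Irr_iff_pideal[OF idem]]
  have me: "m*e = m" and fm: "f*m = m" using irr' hom_iff[OF idem] by blast+
  assume "m \<in> setprod (nabla (pideal f)) (nabla (pideal e))"
  then obtain a b where ab: "m = a*b" "f \<notin> pideal a" "e \<notin> pideal b"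
    unfolding setprod_def nabla_pideal_iff by blast
  have "m = (f*a)*(b*e)" using ab(1) me fm by (simp add: mult.assoc)
  moreover have "(1::'a) \<in> idems TYPE('a)" "b*e \<in> hom e 1" "f*a \<in> hom 1 f"
    using idem by (simp_all add: idems_def hom_iff) (metis mult.assoc)+
  ultimately have "e \<in> pideal (b*e) \<or> f \<in> pideal (f*a)" using irr' by blast
  moreover have "pideal (b*e) \<subseteq> pideal b" "pideal (f*a) \<subseteq> pideal a"
    using pideal_subset pideal_mem[of 1 b e] pideal_mem[of f a 1] by simp_all
  ultimately show False using ab by blast
qed

lemma Irr_if_null:
  fixes e f m :: "'a::{monoid_mult,finite}"
  assumes idem: "e*e = e" "f*f = f" and me: "m*e = m" and fm: "f*m = m" and "null m"
    and "m \<notin> setprod (nabla (pideal f)) (nabla (pideal e))"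
  shows "m \<in> Irr e f"
  unfolding Irr_iff_pideal[OF idem]
proof (intro conjI ballI impI)
  show "m \<in> hom e f" using hom_iff[OF idem] me fm by simp
  show "e \<notin> pideal m"
  proof
    assume "e \<in> pideal m"
    with me obtain s where "s*m = e" by (rule left_inverse_of_pideal)
    then have "m = m*s*m" using me by (simp add: mult.assoc)
    then show False using \<open>null m\<close> unfolding null_def by blast
  qed
  show "f \<notin> pideal m"
  proof
    assume "f \<in> pideal m"
    with fm obtain s where "m*s = f" by (rule right_inverse_of_pideal)
    then have "m = m*s*m" using fm by simp
    then show False using \<open>null m\<close> unfolding null_def by blast
  qed
  fix c h g assume "m = g*h"
  then show "e \<in> pideal h \<or> f \<in> pideal g"
    using assms(6) unfolding setprod_def nabla_pideal_iff by blast
qed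

theorem mainTheorem19:
  fixes X Y :: "'a::{monoid_mult, finite} set" and eX eY m :: 'a
  assumes "DG TYPE('a)"
    and "X \<in> Lambda TYPE('a)" and "Y \<in> Lambda TYPE('a)"
    and "eX \<in> idems TYPE('a)" and "X = pideal eX"
    and "eY \<in> idems TYPE('a)" and "Y = pideal eY"
  shows "m \<in> Irr eX eY \<longleftrightarrow>
    (eX = eR m \<and> eY = eL m \<and> m \<notin> setprod (nabla Y) (nabla X) \<and> null m)"
proof -
  have idem: "eX*eX = eX" "eY*eY = eY" using assms(4,6) by (simp_all add: idems_def)
  show ?thesis
    unfolding assms(5,7)
  proof
    assume irr: "m \<in> Irr eX eY"
    show "eX = eR m \<and> eY = eL m \<and> m \<notin> setprod (nabla (pideal eY)) (nabla (pideal eX)) \<and> null m"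
      using Irr_source_eq_eR[OF assms(1) idem irr] Irr_target_eq_eL[OF assms(1) idem irr]
        Irr_not_mem_nabla_prod[OF idem irr] Irr_null[OF idem irr] by blast
  next
    assume "eX = eR m \<and> eY = eL m \<and> m \<notin> setprod (nabla (pideal eY)) (nabla (pideal eX)) \<and> null m"
    then show "m \<in> Irr eX eY"
      using Irr_if_null[OF idem] eR_idem_stab(2)[OF assms(1)] eL_idem_stab(2)[OF assms(1)] by metis
  qed
qed

end
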